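(* Let $\sigma^2>0$, $a>1$, let $Z_i$ be i.i.d. $\mathcal{N}(0,\sigma^2)$, $U_0=0$, $U_i=aU_{i-1}+Z_i$ for $i\ge1$, and $\hat a_{\mathrm{ML}}(u_1^n)=\frac{\sum_{i=1}^{n-1}u_iu_{i+1}}{\sum_{i=1}^{n-1}u_i^2}$. Then there exists a constant $c\ge\frac12\log a$ such that for all $n$ large enough, $$\mathbb{P}\left[|\hat a_{\mathrm{ML}}(U_1^n)-a|\ge\sqrt{\frac{\log\log n}{n}}\right]\le 2e^{-cn}.$$
   Context: Logarithms are natural. *)

theory Defs
  imports "HOL-Probability.Probability"
begin

fun ar_proc :: "real \<Rightarrow> (nat \<Rightarrow> real) \<Rightarrow> nat \<Rightarrow> real" where
  "ar_proc a z 0 = 0"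
| "ar_proc a z (Suc i) = a * ar_proc a z i + z (Suc i)"

definition a_ML :: "(nat \<Rightarrow> real) \<Rightarrow> nat \<Rightarrow> real" where
  "a_ML u n = (\<Sum>i=1..n-1. u i * u (i+1)) / (\<Sum>i=1..n-1. (u i)\<^sup>2)"

end

theory Submission imports Defs "HOL-Real_Asymp.Real_Asymp" begin

text \<open>
  The estimation error is a_ML - a = (\<Sum> U_i Z_(i+1)) / (\<Sum> U_i^2), so by Cauchy-Schwarz it is
  at most B sqrt(n-1) / |U_(n-1)| whenever all noise terms satisfy |Z_i| \<le> B. A large error
  therefore forces either some |Z_i| \<ge> B, of probability at most n \<sigma>^2 / B^2 by Chebyshev, or
  |U_(n-1)| < n B. As U_(n-1) is Gaussian with standard deviation at least \<sigma> a^(n-2), and a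
  Gaussian density is bounded by the inverse of its standard deviation, the latter event has
  probability at most 2 n B / (\<sigma> a^(n-2)). The choice B = a^(n/3) makes both bounds
  O(n a^(-2n/3)), eventually below 2 a^(-n/2).
\<close>

lemma normal_density_le_inverse:
  assumes "0 < \<sigma>"
  shows "normal_density \<mu> \<sigma> x \<le> 1 / \<sigma>"
proof -
  have "normal_density \<mu> \<sigma> x \<le> 1 / sqrt (2 * pi * \<sigma>\<^sup>2)"
    unfolding normal_density_def by (rule mult_right_le_one_le) auto
  also have "\<dots> \<le> 1 / \<sigma>"
  proof -
    have "1 \<le> sqrt (2 * pi)"
      using pi_gt3 by simp
    then have "\<sigma> \<le> sqrt (2 * pi * \<sigma>\<^sup>2)"
      using assms by (simp add: real_sqrt_mult)
    then show ?thesis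
      using assms by (simp add: frac_le)
  qed
  finally show ?thesis .
qed

lemma (in prob_space) normal_distributed_prob_abs_less:
  assumes "0 < \<sigma>" and D: "distributed M lborel X (normal_density \<mu> \<sigma>)" and "0 \<le> d"
  shows "prob {\<omega> \<in> space M. \<bar>X \<omega>\<bar> < d} \<le> 2 * d / \<sigma>"
proof -
  have "{\<omega> \<in> space M. \<bar>X \<omega>\<bar> < d} = X -` {-d<..<d} \<inter> space M"
    by auto
  then have "emeasure M {\<omega> \<in> space M. \<bar>X \<omega>\<bar> < d}
      = (\<integral>\<^sup>+x. ennreal (normal_density \<mu> \<sigma> x) * indicator {-d<..<d} x \<partial>lborel)"
    using distributed_emeasure[OF D] by simp
  also have "\<dots> \<le> (\<integral>\<^sup>+x. ennreal (1 / \<sigma>) * indicator {-d<..<d} x \<partial>lborel)"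
    using normal_density_le_inverse[OF \<open>0 < \<sigma>\<close>]
    by (intro nn_integral_mono) (auto simp: indicator_def intro!: ennreal_leI)
  also have "\<dots> = ennreal (2 * d / \<sigma>)"
    using assms by (simp add: nn_integral_cmult_indicator ennreal_mult'[symmetric])
  finally show ?thesis
    using assms by (simp add: emeasure_eq_measure ennreal_le_iff)
qed

lemma (in prob_space) normal_distributed_prob_abs_ge:
  assumes "0 < \<sigma>" and D: "distributed M lborel X (normal_density 0 \<sigma>)" and "0 < B"
  shows "prob {\<omega> \<in> space M. B \<le> \<bar>X \<omega>\<bar>} \<le> \<sigma>\<^sup>2 / B\<^sup>2"
proof -
  have [measurable]: "X \<in> borel_measurable M"
    using D by (simp add: distributed_def)
  have "integrable lborel (\<lambda>x. normal_density 0 \<sigma> x * x\<^sup>2)"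
    using integrable_normal_moment[OF assms(1), of 0 2] by simp
  then have "integrable M (\<lambda>\<omega>. (X \<omega>)\<^sup>2)"
    using distributed_integrable[OF D, of "\<lambda>x. x\<^sup>2"] by simp
  then show ?thesis
    using Chebyshev_inequality[of X B] \<open>0 < B\<close>
      normal_distributed_expectation[OF assms(1,2)] normal_distributed_variance[OF assms(1,2)]
    by simp
qed

lemma ar_proc_eq_sum: "ar_proc a z k = (\<Sum>j=1..k. a ^ (k - j) * z j)"
proof (induction k)
  case 0
  then show ?case by simp
next
  case (Suc k)
  have "(\<Sum>j=1..k. a ^ (Suc k - j) * z j) = a * (\<Sum>j=1..k. a ^ (k - j) * z j)"
    by (simp add: sum_distrib_left Suc_diff_le mult.assoc)
  then show ?case
    using Suc by (simp add: sum.cl_ivl_Suc)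
qed

lemma (in prob_space) ar_proc_normal_distributed:
  assumes "0 < \<sigma>" and "a \<noteq> 0" and "1 \<le> k"
    and ind: "indep_vars (\<lambda>_. borel) Z {1..}"
    and normal: "\<And>i. 1 \<le> i \<Longrightarrow> distributed M lborel (Z i) (normal_density 0 \<sigma>)"
  shows "distributed M lborel (\<lambda>\<omega>. ar_proc a (\<lambda>i. Z i \<omega>) k)
           (normal_density 0 (sqrt (\<Sum>j=1..k. (a ^ (k - j) * \<sigma>)\<^sup>2)))"
proof -
  define X where "X j \<omega> = a ^ (k - j) * Z j \<omega>" for j \<omega>
  have "distributed M lborel (X j) (normal_density 0 (\<bar>a ^ (k - j)\<bar> * \<sigma>))" if "j \<in> {1..k}" for j
    using normal_density_affine[OF normal \<open>0 < \<sigma>\<close>, of j "a ^ (k - j)" 0] that \<open>a \<noteq> 0\<close>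
    unfolding X_def by simp
  moreover have "indep_vars (\<lambda>_. borel) X {1..k}"
    unfolding X_def
    by (rule indep_vars_compose2[OF indep_vars_subset[OF ind], where Y="\<lambda>j x. a ^ (k - j) * x"]) auto
  ultimately have "distributed M lborel (\<lambda>\<omega>. \<Sum>j\<in>{1..k}. X j \<omega>)
      (normal_density (\<Sum>j\<in>{1..k}. 0) (sqrt (\<Sum>j\<in>{1..k}. (\<bar>a ^ (k - j)\<bar> * \<sigma>)\<^sup>2)))"
    using assms by (intro sum_indep_normal) auto
  then show ?thesis
    unfolding X_def by (simp add: ar_proc_eq_sum power_mult_distrib)
qed

lemma a_ML_ar_proc_diff_eq:
  assumes "(\<Sum>i=1..n-1. (ar_proc a z i)\<^sup>2) \<noteq> 0"
  shows "a_ML (ar_proc a z) n - a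
           = (\<Sum>i=1..n-1. ar_proc a z i * z (Suc i)) / (\<Sum>i=1..n-1. (ar_proc a z i)\<^sup>2)"
proof -
  have "(\<Sum>i=1..n-1. ar_proc a z i * ar_proc a z (i + 1))
      = a * (\<Sum>i=1..n-1. (ar_proc a z i)\<^sup>2) + (\<Sum>i=1..n-1. ar_proc a z i * z (Suc i))"
    by (simp add: sum_distrib_left sum.distrib[symmetric] algebra_simps power2_eq_square)
  then show ?thesis
    using assms unfolding a_ML_def by (simp add: field_simps)
qed

lemma abs_sum_mult_le_sqrt_card:
  fixes v w :: "'a \<Rightarrow> real"
  assumes "0 \<le> B" and "\<forall>i\<in>I. \<bar>w i\<bar> \<le> B"
  shows "\<bar>\<Sum>i\<in>I. v i * w i\<bar> \<le> sqrt (\<Sum>i\<in>I. (v i)\<^sup>2) * (B * sqrt (real (card I)))"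
proof -
  have "(\<Sum>i\<in>I. (w i)\<^sup>2) \<le> (\<Sum>i\<in>I. B\<^sup>2)"
    using assms by (intro sum_mono) (auto simp: abs_le_square_iff[symmetric])
  then have "(\<Sum>i\<in>I. (w i)\<^sup>2) \<le> real (card I) * B\<^sup>2"
    by simp
  moreover have "(\<Sum>i\<in>I. v i * w i)\<^sup>2 \<le> (\<Sum>i\<in>I. (v i)\<^sup>2) * (\<Sum>i\<in>I. (w i)\<^sup>2)"
    by (rule Cauchy_Schwarz_ineq_sum)
  moreover have "0 \<le> (\<Sum>i\<in>I. (v i)\<^sup>2)"
    by (simp add: sum_nonneg)
  ultimately have "(\<Sum>i\<in>I. v i * w i)\<^sup>2 \<le> (\<Sum>i\<in>I. (v i)\<^sup>2) * (real (card I) * B\<^sup>2)"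
    by (meson order_trans mult_left_mono)
  then have "\<bar>\<Sum>i\<in>I. v i * w i\<bar> \<le> sqrt ((\<Sum>i\<in>I. (v i)\<^sup>2) * (real (card I) * B\<^sup>2))"
    using real_sqrt_le_mono by fastforce
  also have "\<dots> = sqrt (\<Sum>i\<in>I. (v i)\<^sup>2) * (B * sqrt (real (card I)))"
    using assms by (simp add: real_sqrt_mult)
  finally show ?thesis .
qed

lemma a_ML_ar_proc_error_le:
  assumes "0 \<le> B" and noise: "\<forall>i\<in>{2..n}. \<bar>z i\<bar> \<le> B"
    and "0 < d" and last: "d \<le> \<bar>ar_proc a z (n - 1)\<bar>"
  shows "\<bar>a_ML (ar_proc a z) n - a\<bar> \<le> B * sqrt (real (n - 1)) / d"
proof -
  define u where "u = ar_proc a z"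
  define S where "S = (\<Sum>i=1..n-1. (u i)\<^sup>2)"
  define T where "T = (\<Sum>i=1..n-1. u i * z (Suc i))"
  have "n - 1 \<noteq> 0"
    using \<open>0 < d\<close> last by (auto simp del: One_nat_def)
  then have "(u (n - 1))\<^sup>2 \<le> S"
    unfolding S_def by (intro member_le_sum) auto
  then have uS: "\<bar>u (n - 1)\<bar> \<le> sqrt S"
    using real_le_rsqrt by simp
  then have "0 < sqrt S"
    using \<open>0 < d\<close> last unfolding u_def by linarith
  have "\<forall>i\<in>{1..n-1}. \<bar>z (Suc i)\<bar> \<le> B"
    using noise by auto
  then have T: "\<bar>T\<bar> \<le> sqrt S * (B * sqrt (real (n - 1)))"
    using abs_sum_mult_le_sqrt_card[OF \<open>0 \<le> B\<close>, of "{1..n-1}"] unfolding S_def T_def by simp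
  have "\<bar>a_ML u n - a\<bar> = \<bar>T\<bar> / (sqrt S * sqrt S)"
    using a_ML_ar_proc_diff_eq[of a z n] \<open>0 < sqrt S\<close>
    unfolding S_def T_def u_def by (simp add: abs_divide)
  also have "\<dots> \<le> sqrt S * (B * sqrt (real (n - 1))) / (sqrt S * sqrt S)"
    using T by (rule divide_right_mono) simp
  also have "\<dots> = B * sqrt (real (n - 1)) / sqrt S"
    using \<open>0 < sqrt S\<close> by (intro mult_divide_mult_cancel_left) simp
  also have "\<dots> \<le> B * sqrt (real (n - 1)) / d"
    using uS last \<open>0 \<le> B\<close> \<open>0 < d\<close> \<open>0 < sqrt S\<close> unfolding u_def by (intro divide_left_mono) auto
  finally show ?thesis
    unfolding u_def .
qed

lemma (in prob_space) normal_distributed_prob_UN_abs_ge: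
  assumes "finite I" and "0 < \<sigma>" and "0 < B"
    and normal: "\<And>i. i \<in> I \<Longrightarrow> distributed M lborel (Z i) (normal_density 0 \<sigma>)"
  shows "prob (\<Union>i\<in>I. {\<omega> \<in> space M. B \<le> \<bar>Z i \<omega>\<bar>}) \<le> real (card I) * \<sigma>\<^sup>2 / B\<^sup>2"
proof -
  have "{\<omega> \<in> space M. B \<le> \<bar>Z i \<omega>\<bar>} \<in> events" if "i \<in> I" for i
  proof -
    have [measurable]: "Z i \<in> borel_measurable M"
      using normal[OF that] by (simp add: distributed_def)
    show ?thesis
      by measurable
  qed
  then have "prob (\<Union>i\<in>I. {\<omega> \<in> space M. B \<le> \<bar>Z i \<omega>\<bar>}) \<le> (\<Sum>i\<in>I. prob {\<omega> \<in> space M. B \<le> \<bar>Z i \<omega>\<bar>})"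
    using \<open>finite I\<close> by (intro finite_measure_subadditive_finite) auto
  also have "\<dots> \<le> (\<Sum>i\<in>I. \<sigma>\<^sup>2 / B\<^sup>2)"
    using assms by (intro sum_mono normal_distributed_prob_abs_ge) auto
  finally show ?thesis
    by simp
qed

lemma (in prob_space) ar_proc_prob_abs_less:
  assumes "0 < \<sigma>" and "a \<noteq> 0" and "1 \<le> k" and "0 \<le> d"
    and "indep_vars (\<lambda>_. borel) Z {1..}"
    and "\<And>i. 1 \<le> i \<Longrightarrow> distributed M lborel (Z i) (normal_density 0 \<sigma>)"
  shows "prob {\<omega> \<in> space M. \<bar>ar_proc a (\<lambda>i. Z i \<omega>) k\<bar> < d} \<le> 2 * d / (\<bar>a\<bar> ^ (k - 1) * \<sigma>)"
proof -
  define t where "t = sqrt (\<Sum>j=1..k. (a ^ (k - j) * \<sigma>)\<^sup>2)"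
  have "(a ^ (k - 1) * \<sigma>)\<^sup>2 \<le> (\<Sum>j=1..k. (a ^ (k - j) * \<sigma>)\<^sup>2)"
    using \<open>1 \<le> k\<close> by (intro member_le_sum) auto
  moreover have "(\<bar>a\<bar> ^ (k - 1) * \<sigma>)\<^sup>2 = (a ^ (k - 1) * \<sigma>)\<^sup>2"
    by (simp add: power_mult_distrib flip: power_abs)
  ultimately have std: "\<bar>a\<bar> ^ (k - 1) * \<sigma> \<le> t"
    unfolding t_def by (simp add: real_le_rsqrt)
  moreover have "0 < \<bar>a\<bar> ^ (k - 1) * \<sigma>"
    using assms by simp
  ultimately have "0 < t"
    by linarith
  moreover have "distributed M lborel (\<lambda>\<omega>. ar_proc a (\<lambda>i. Z i \<omega>) k) (normal_density 0 t)"
    unfolding t_def using assms by (intro ar_proc_normal_distributed) auto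
  ultimately have "prob {\<omega> \<in> space M. \<bar>ar_proc a (\<lambda>i. Z i \<omega>) k\<bar> < d} \<le> 2 * d / t"
    using \<open>0 \<le> d\<close> by (rule normal_distributed_prob_abs_less)
  also have "\<dots> \<le> 2 * d / (\<bar>a\<bar> ^ (k - 1) * \<sigma>)"
    using assms std by (intro frac_le) auto
  finally show ?thesis .
qed

lemma (in prob_space) a_ML_ar_proc_deviation_le:
  assumes "0 < \<sigma>" and "a \<noteq> 0"
    and "indep_vars (\<lambda>_. borel) Z {1..}"
    and normal: "\<And>i. 1 \<le> i \<Longrightarrow> distributed M lborel (Z i) (normal_density 0 \<sigma>)"
    and "2 \<le> n" and "0 < B" and "0 < d" and close: "B * sqrt (real (n - 1)) / d < \<epsilon>"
  shows "prob {\<omega> \<in> space M. \<epsilon> \<le> \<bar>a_ML (ar_proc a (\<lambda>i. Z i \<omega>)) n - a\<bar>}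
           \<le> real (n - 1) * \<sigma>\<^sup>2 / B\<^sup>2 + 2 * d / (\<bar>a\<bar> ^ (n - 2) * \<sigma>)"
proof -
  define large_noise where "large_noise = (\<Union>i\<in>{2..n}. {\<omega> \<in> space M. B \<le> \<bar>Z i \<omega>\<bar>})"
  define small_last where "small_last = {\<omega> \<in> space M. \<bar>ar_proc a (\<lambda>i. Z i \<omega>) (n - 1)\<bar> < d}"
  have "prob large_noise \<le> real (card {2..n}) * \<sigma>\<^sup>2 / B\<^sup>2"
    unfolding large_noise_def using assms by (intro normal_distributed_prob_UN_abs_ge) auto
  then have noise_prob: "prob large_noise \<le> real (n - 1) * \<sigma>\<^sup>2 / B\<^sup>2"
    by simp
  have last_prob: "prob small_last \<le> 2 * d / (\<bar>a\<bar> ^ (n - 2) * \<sigma>)"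
    unfolding small_last_def using assms ar_proc_prob_abs_less[of \<sigma> a "n - 1" d Z]
    by (simp add: numeral_2_eq_2)
  have bad_subset: "{\<omega> \<in> space M. \<epsilon> \<le> \<bar>a_ML (ar_proc a (\<lambda>i. Z i \<omega>)) n - a\<bar>}
      \<subseteq> large_noise \<union> small_last"
  proof (rule subsetI, rule ccontr)
    fix \<omega>
    assume bad: "\<omega> \<in> {\<omega> \<in> space M. \<epsilon> \<le> \<bar>a_ML (ar_proc a (\<lambda>i. Z i \<omega>)) n - a\<bar>}"
      and "\<omega> \<notin> large_noise \<union> small_last"
    then have "\<forall>i\<in>{2..n}. \<bar>Z i \<omega>\<bar> \<le> B" and "d \<le> \<bar>ar_proc a (\<lambda>i. Z i \<omega>) (n - 1)\<bar>"
      unfolding large_noise_def small_last_def by auto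
    then have "\<bar>a_ML (ar_proc a (\<lambda>i. Z i \<omega>)) n - a\<bar> \<le> B * sqrt (real (n - 1)) / d"
      using \<open>0 < d\<close> \<open>0 < B\<close> by (intro a_ML_ar_proc_error_le) auto
    then show False
      using bad close by simp
  qed
  have "random_variable borel (Z i)" if "1 \<le> i" for i
    using normal[OF that] by (simp add: distributed_def)
  moreover have [measurable]: "random_variable borel (\<lambda>\<omega>. ar_proc a (\<lambda>i. Z i \<omega>) (n - 1))"
    using assms ar_proc_normal_distributed[of \<sigma> a "n - 1" Z] by (simp add: distributed_def)
  ultimately have noise_event: "large_noise \<in> events" and last_event: "small_last \<in> events"
    unfolding large_noise_def small_last_def by measurable
  have "prob {\<omega> \<in> space M. \<epsilon> \<le> \<bar>a_ML (ar_proc a (\<lambda>i. Z i \<omega>)) n - a\<bar>}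
      \<le> prob (large_noise \<union> small_last)"
    using bad_subset noise_event last_event by (intro finite_measure_mono) auto
  also have "\<dots> \<le> prob large_noise + prob small_last"
    using noise_event last_event by (rule measure_Un_le)
  finally show ?thesis
    using noise_prob last_prob by linarith
qed

lemma (in prob_space) a_ML_ar_proc_deviation_le_powr:
  assumes "0 < \<sigma>" and "1 < a"
    and "indep_vars (\<lambda>_. borel) Z {1..}"
    and "\<And>i. 1 \<le> i \<Longrightarrow> distributed M lborel (Z i) (normal_density 0 \<sigma>)"
    and "2 \<le> n" and close: "sqrt (real n - 1) / real n < \<epsilon>"
  shows "prob {\<omega> \<in> space M. \<epsilon> \<le> \<bar>a_ML (ar_proc a (\<lambda>i. Z i \<omega>)) n - a\<bar>}
           \<le> ((real n - 1) * \<sigma>\<^sup>2 + 2 * real n * a\<^sup>2 / \<sigma>) / a powr (2 * real n / 3)"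
proof -
  define B where "B = a powr (real n / 3)"
  have "0 < B"
    using \<open>1 < a\<close> by (simp add: B_def)
  then have "B * sqrt (real (n - 1)) / (real n * B) < \<epsilon>"
    using close \<open>2 \<le> n\<close> by (simp add: of_nat_diff)
  then have "prob {\<omega> \<in> space M. \<epsilon> \<le> \<bar>a_ML (ar_proc a (\<lambda>i. Z i \<omega>)) n - a\<bar>}
      \<le> real (n - 1) * \<sigma>\<^sup>2 / B\<^sup>2 + 2 * (real n * B) / (\<bar>a\<bar> ^ (n - 2) * \<sigma>)"
    using assms \<open>0 < B\<close> by (intro a_ML_ar_proc_deviation_le) auto
  also have "B\<^sup>2 = a powr (2 * real n / 3)"
    using \<open>1 < a\<close> unfolding B_def by (simp add: powr_powr[symmetric] power2_eq_square flip: powr_add)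
  also have "\<bar>a\<bar> ^ (n - 2) = a powr (2 * real n / 3) * B / a\<^sup>2"
  proof -
    have "a ^ (n - 2) * a\<^sup>2 = a ^ n"
      using \<open>2 \<le> n\<close> by (metis le_add_diff_inverse2 power_add)
    then show ?thesis
      using \<open>1 < a\<close> unfolding B_def by (simp add: powr_realpow field_simps flip: powr_add)
  qed
  finally show ?thesis
    using \<open>0 < \<sigma>\<close> \<open>0 < B\<close> \<open>1 < a\<close> \<open>2 \<le> n\<close> by (simp add: of_nat_diff field_simps)
qed

theorem corollary1:
  fixes M :: "'s measure" and Z :: "nat \<Rightarrow> 's \<Rightarrow> real" and \<sigma> a :: real
  assumes "prob_space M"
    and "\<sigma> > 0" and "a > 1"
    and "prob_space.indep_vars M (\<lambda>_. borel) Z {1..}"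
    and "\<And>i. i \<ge> 1 \<Longrightarrow> distributed M lborel (Z i) (normal_density 0 \<sigma>)"
  shows "\<exists>c \<ge> ln a / 2. \<exists>N. \<forall>n \<ge> N.
           measure M {\<omega> \<in> space M.
              \<bar>a_ML (ar_proc a (\<lambda>i. Z i \<omega>)) n - a\<bar> \<ge> sqrt (ln (ln (real n)) / real n)}
           \<le> 2 * exp (- c * real n)"
proof -
  interpret prob_space M
    by fact
  have "\<forall>\<^sub>F n in sequentially. sqrt (real n - 1) / real n < sqrt (ln (ln (real n)) / real n)"
    by real_asymp
  moreover have "\<forall>\<^sub>F n in sequentially.
      ((real n - 1) * \<sigma>\<^sup>2 + 2 * real n * a\<^sup>2 / \<sigma>) / a powr (2 * real n / 3) \<le> 2 * exp (- (ln a / 2) * real n)"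
    using assms by real_asymp
  moreover have "\<forall>\<^sub>F n in sequentially. 2 \<le> n"
    by (rule eventually_ge_at_top)
  ultimately have "\<forall>\<^sub>F n in sequentially. measure M {\<omega> \<in> space M.
      \<bar>a_ML (ar_proc a (\<lambda>i. Z i \<omega>)) n - a\<bar> \<ge> sqrt (ln (ln (real n)) / real n)}
    \<le> 2 * exp (- (ln a / 2) * real n)"
    by eventually_elim (use assms in \<open>blast intro: order_trans[OF a_ML_ar_proc_deviation_le_powr]\<close>)
  then show ?thesis
    unfolding eventually_sequentially by blast
qed

end
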